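(* In the setting of the context, for any $H\in\mathbb S^n$, $$\langle\widetilde{\mathcal D}(H),\widetilde{\mathcal D}^\perp(H)\rangle=2\langle\tilde\Theta\circ\hat H_{\gamma\alpha},\tilde\Theta^\perp\circ\hat H_{\gamma\alpha}\rangle\ge0,$$ with equality if and only if $\hat H_{\gamma\alpha}=0$, and $$\|H\|_F^2-\|\widetilde{\mathcal M}(H)\|_F^2=\|\mathcal P\widetilde{\mathcal D}(H)\|_F^2+\|\mathcal P^\perp\widetilde{\mathcal D}^\perp(H)\|_F^2+4\langle\tilde\Theta\circ\hat H_{\gamma\alpha},\tilde\Theta^\perp\circ\hat H_{\gamma\alpha}\rangle.$$
   Context: $\mathbb S^p$: real symmetric $p\times p$ matrices with trace inner product and Frobenius norm; $\Pi_{\mathbb S^p_+}$ projection onto the PSD cone; $\circ$ Hadamard product. $\mathcal AX=(\langle A_i,X\rangle)_i$ ($A_i\in\mathbb S^n$) surjective, $\mathcal P=\mathcal A^*(\mathcal A\mathcal A^* )^{-1}\mathcal A$, $\mathcal P^\perp=\mathrm{Id}-\mathcal P$. $Z_\star=X_\star-\sigma S_\star$ ($\sigma>0$) for a KKT point $(X_\star,y_\star,S_\star)$ of min $\langle C,X\rangle$ s.t. $\mathcal AX=b$, $X\succeq0$ / max $b^\top y$ s.t. $\mathcal A^*y+S=C$, $S\succeq0$; $r=\operatorname{rank}X_\star$, $s=\operatorname{rank}S_\star$; $Z_\star=Q_\star\operatorname{diag}(\lambda_1,\dots,\lambda_n)Q_\star^\top$ with $Q_\star$ orthogonal and $\lambda_1\ge\dots\ge\lambda_r>0=\lambda_{r+1}=\dots=\lambda_{n-s}>\lambda_{n-s+1}\ge\dots\ge\lambda_n$.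 Index sets $\alpha=\{1..r\}$, $\beta=\{r+1..n-s\}$, $\gamma=\{n-s+1..n\}$; $\hat H=Q_\star^\top HQ_\star$ with blocks $\hat H_{\alpha\alpha},\hat H_{\beta\alpha},\hat H_{\gamma\alpha},\hat H_{\beta\beta},\hat H_{\gamma\beta},\hat H_{\gamma\gamma}$. $\tilde\Theta\in\mathbb R^{s\times r}$, $\tilde\Theta_{ij}=\lambda_j/(\lambda_j-\lambda_{n-s+i})$, $\tilde\Theta^\perp=E_{s\times r}-\tilde\Theta$ (all-ones minus $\tilde\Theta$). $\widetilde{\mathcal D}(H)=Q_\star\begin{pmatrix}\hat H_{\alpha\alpha}&\hat H_{\beta\alpha}^\top&\tilde\Theta^\top\circ\hat H_{\gamma\alpha}^\top\\\hat H_{\beta\alpha}&\Pi_{\mathbb S^{|\beta|}_+}(\hat H_{\beta\beta})&0\\\tilde\Theta\circ\hat H_{\gamma\alpha}&0&0\end{pmatrix}Q_\star^\top$, $\widetilde{\mathcal D}^\perp(H)=H-\widetilde{\mathcal D}(H)$, $\widetilde{\mathcal M}(H)=\mathcal P\widetilde{\mathcal D}^\perp(H)+\mathcal P^\perp\widetilde{\mathcal D}(H)$. *)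

theory Defs
  imports "Jordan_Normal_Form.DL_Rank"
begin

definition mtrace :: "real mat \<Rightarrow> real" where
  "mtrace A = (\<Sum>i<dim_row A. A $$ (i,i))"

definition minner :: "real mat \<Rightarrow> real mat \<Rightarrow> real" where
  "minner A B = mtrace (transpose_mat A * B)"

definition fnorm :: "real mat \<Rightarrow> real" where
  "fnorm A = sqrt (minner A A)"

definition symm_mats :: "nat \<Rightarrow> real mat set" where
  "symm_mats p = {A \<in> carrier_mat p p. transpose_mat A = A}"

definition psd_mats :: "nat \<Rightarrow> real mat set" where
  "psd_mats p = {A \<in> symm_mats p. \<forall>v \<in> carrier_vec p. 0 \<le> v \<bullet> (A *\<^sub>v v)}"

definition proj_psd :: "nat \<Rightarrow> real mat \<Rightarrow> real mat" where
  "proj_psd p M = (THE Y. Y \<in> psd_mats p \<and> (\<forall>Z \<in> psd_mats p. fnorm (M - Y) \<le> fnorm (M - Z)))"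

definition hadamard :: "real mat \<Rightarrow> real mat \<Rightarrow> real mat" where
  "hadamard A B = mat (dim_row A) (dim_col A) (\<lambda>(i,j). A $$ (i,j) * B $$ (i,j))"

definition ones_mat :: "nat \<Rightarrow> nat \<Rightarrow> real mat" where
  "ones_mat s r = mat s r (\<lambda>_. 1)"

definition blk :: "real mat \<Rightarrow> nat \<Rightarrow> nat \<Rightarrow> nat \<Rightarrow> nat \<Rightarrow> real mat" where
  "blk A i0 i1 j0 j1 = mat (i1 - i0) (j1 - j0) (\<lambda>(i,j). A $$ (i + i0, j + j0))"

definition Aop :: "(nat \<Rightarrow> real mat) \<Rightarrow> nat \<Rightarrow> real mat \<Rightarrow> real vec" where
  "Aop As m X = vec m (\<lambda>i. minner (As i) X)"

definition Aadj :: "nat \<Rightarrow> (nat \<Rightarrow> real mat) \<Rightarrow> nat \<Rightarrow> real vec \<Rightarrow> real mat" where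
  "Aadj n As m y = mat n n (\<lambda>(k,l). \<Sum>i<m. y $ i * As i $$ (k,l))"

text \<open>P = A^* (A A^*)^{-1} A : the vector (A A^*)^{-1} A H is the unique solution y of (A A^*) y = A H.\<close>
definition Pproj :: "nat \<Rightarrow> (nat \<Rightarrow> real mat) \<Rightarrow> nat \<Rightarrow> real mat \<Rightarrow> real mat" where
  "Pproj n As m H = Aadj n As m
     (THE y. y \<in> carrier_vec m \<and> Aop As m (Aadj n As m y) = Aop As m H)"

definition Pperp :: "nat \<Rightarrow> (nat \<Rightarrow> real mat) \<Rightarrow> nat \<Rightarrow> real mat \<Rightarrow> real mat" where
  "Pperp n As m H = H - Pproj n As m H"

definition sdp_kkt :: "nat \<Rightarrow> (nat \<Rightarrow> real mat) \<Rightarrow> nat \<Rightarrow> real vec \<Rightarrow> real mat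
    \<Rightarrow> real mat \<Rightarrow> real vec \<Rightarrow> real mat \<Rightarrow> bool" where
  "sdp_kkt n As m b C X y S \<longleftrightarrow>
     X \<in> psd_mats n \<and> Aop As m X = b \<and>
     y \<in> carrier_vec m \<and> S \<in> psd_mats n \<and> Aadj n As m y + S = C \<and>
     minner X S = 0"

text \<open>Eigenvalues lam 0, ..., lam (n-1) correspond to lambda_1, ..., lambda_n;
  alpha = {0..<r}, beta = {r..<n-s}, gamma = {n-s..<n} (0-based).\<close>

definition Hhat :: "real mat \<Rightarrow> real mat \<Rightarrow> real mat" where
  "Hhat Q H = transpose_mat Q * H * Q"

definition Theta :: "(nat \<Rightarrow> real) \<Rightarrow> nat \<Rightarrow> nat \<Rightarrow> nat \<Rightarrow> real mat" where
  "Theta lam n r s = mat s r (\<lambda>(i,j). lam j / (lam j - lam (n - s + i)))"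

definition Theta_perp :: "(nat \<Rightarrow> real) \<Rightarrow> nat \<Rightarrow> nat \<Rightarrow> nat \<Rightarrow> real mat" where
  "Theta_perp lam n r s = ones_mat s r - Theta lam n r s"

definition H_aa :: "nat \<Rightarrow> nat \<Rightarrow> nat \<Rightarrow> real mat \<Rightarrow> real mat \<Rightarrow> real mat" where
  "H_aa n r s Q H = blk (Hhat Q H) 0 r 0 r"
definition H_ba :: "nat \<Rightarrow> nat \<Rightarrow> nat \<Rightarrow> real mat \<Rightarrow> real mat \<Rightarrow> real mat" where
  "H_ba n r s Q H = blk (Hhat Q H) r (n - s) 0 r"
definition H_ga :: "nat \<Rightarrow> nat \<Rightarrow> nat \<Rightarrow> real mat \<Rightarrow> real mat \<Rightarrow> real mat" where
  "H_ga n r s Q H = blk (Hhat Q H) (n - s) n 0 r"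
definition H_bb :: "nat \<Rightarrow> nat \<Rightarrow> nat \<Rightarrow> real mat \<Rightarrow> real mat \<Rightarrow> real mat" where
  "H_bb n r s Q H = blk (Hhat Q H) r (n - s) r (n - s)"

definition Dtilde :: "nat \<Rightarrow> nat \<Rightarrow> nat \<Rightarrow> real mat \<Rightarrow> (nat \<Rightarrow> real) \<Rightarrow> real mat \<Rightarrow> real mat" where
  "Dtilde n r s Q lam H =
    (let Haa = H_aa n r s Q H; Hba = H_ba n r s Q H;
         TG = hadamard (Theta lam n r s) (H_ga n r s Q H);
         Pbb = proj_psd (n - s - r) (H_bb n r s Q H);
         M = mat n n (\<lambda>(i,j).
               if i < r then
                 (if j < r then Haa $$ (i, j)
                  else if j < n - s then (transpose_mat Hba) $$ (i, j - r)
                  else (transpose_mat TG) $$ (i, j - (n - s)))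
               else if i < n - s then
                 (if j < r then Hba $$ (i - r, j)
                  else if j < n - s then Pbb $$ (i - r, j - r)
                  else 0)
               else
                 (if j < r then TG $$ (i - (n - s), j) else 0))
     in Q * M * transpose_mat Q)"

definition Dtilde_perp :: "nat \<Rightarrow> nat \<Rightarrow> nat \<Rightarrow> real mat \<Rightarrow> (nat \<Rightarrow> real) \<Rightarrow> real mat \<Rightarrow> real mat" where
  "Dtilde_perp n r s Q lam H = H - Dtilde n r s Q lam H"

definition Mtilde :: "(nat \<Rightarrow> real mat) \<Rightarrow> nat \<Rightarrow> nat \<Rightarrow> nat \<Rightarrow> nat \<Rightarrow> real mat \<Rightarrow> (nat \<Rightarrow> real)
    \<Rightarrow> real mat \<Rightarrow> real mat" where
  "Mtilde As m n r s Q lam H =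
     Pproj n As m (Dtilde_perp n r s Q lam H) + Pperp n As m (Dtilde n r s Q lam H)"

end

theory Submission
  imports Defs "HOL-Analysis.Function_Topology"
begin

text \<open>Everything is computed in the eigenbasis of Z: conjugation by Q preserves the trace
  inner product, so the inner product of D(H) with H - D(H) is the entrywise pairing of the middle
  block matrix of D(H) with H-hat minus that matrix. Only three blocks contribute. The beta-beta
  block gives the pairing of Pi(B) with B - Pi(B) for B = H-hat_bb, which vanishes because the PSD
  cone is a cone, so Pi(B) is also the nearest point on its own ray. The gamma-alpha block and its
  mirror image each give the sum of Theta (1 - Theta) H-hat_ga^2, and 0 < Theta < 1 because
  lambda_j > 0 > lambda_(n-s+i).

  The norm identity is Pythagoras: surjectivity of the constraint map makes its Gram matrix
  invertible, so P is a well-defined orthogonal projection, and after writing H = D + D-perp and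
  M = P D-perp + P-perp D every cross term except the one between D and D-perp cancels.\<close>

section \<open>The trace inner product\<close>

lemma minner_eq_sum:
  assumes "A \<in> carrier_mat p q" "B \<in> carrier_mat p q"
  shows "minner A B = (\<Sum>i<p. \<Sum>j<q. A $$ (i,j) * B $$ (i,j))"
proof -
  have "minner A B = (\<Sum>j<q. \<Sum>i<p. A $$ (i,j) * B $$ (i,j))"
    using assms unfolding minner_def mtrace_def
    by (auto simp: scalar_prod_def lessThan_atLeast0 intro!: sum.cong)
  also have "\<dots> = (\<Sum>i<p. \<Sum>j<q. A $$ (i,j) * B $$ (i,j))"
    by (rule sum.swap)
  finally show ?thesis .
qed

lemma mtrace_mult_comm:
  assumes "A \<in> carrier_mat p q" "B \<in> carrier_mat q p"
  shows "mtrace (A * B) = mtrace (B * A)"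
proof -
  have "mtrace (A * B) = (\<Sum>i<p. \<Sum>k<q. A $$ (i,k) * B $$ (k,i))"
    using assms unfolding mtrace_def
    by (auto simp: scalar_prod_def lessThan_atLeast0 intro!: sum.cong)
  also have "\<dots> = (\<Sum>k<q. \<Sum>i<p. B $$ (k,i) * A $$ (i,k))"
    by (subst sum.swap) (simp add: mult.commute)
  also have "\<dots> = mtrace (B * A)"
    using assms unfolding mtrace_def
    by (auto simp: scalar_prod_def lessThan_atLeast0 intro!: sum.cong)
  finally show ?thesis .
qed

lemma minner_commute:
  assumes "A \<in> carrier_mat p q" "B \<in> carrier_mat p q"
  shows "minner A B = minner B A"
  using assms by (simp add: minner_eq_sum mult.commute)

lemma minner_diff_right:
  assumes "A \<in> carrier_mat p q" "B \<in> carrier_mat p q" "C \<in> carrier_mat p q"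
  shows "minner C (A - B) = minner C A - minner C B"
proof -
  have "A - B \<in> carrier_mat p q" using assms by auto
  then show ?thesis
    using assms by (simp add: minner_eq_sum[of _ p q] minus_carrier_mat right_diff_distrib sum_subtractf)
qed

lemma minner_add_self:
  assumes "A \<in> carrier_mat p q" "B \<in> carrier_mat p q"
  shows "minner (A + B) (A + B) = minner A A + minner B B + 2 * minner A B"
  using assms
  by (simp add: minner_eq_sum[of _ p q] sum.distrib sum_distrib_left algebra_simps)

lemma minner_self_nonneg:
  assumes "A \<in> carrier_mat p q"
  shows "0 \<le> minner A A"
  using assms by (simp add: minner_eq_sum sum_nonneg)

lemma power2_fnorm:
  assumes "A \<in> carrier_mat p q"
  shows "(fnorm A)\<^sup>2 = minner A A"
  using minner_self_nonneg[OF assms] by (simp add: fnorm_def)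

lemma double_sum_nonneg_eq_0_iff:
  fixes f :: "nat \<Rightarrow> nat \<Rightarrow> real"
  assumes "\<And>i j. i < p \<Longrightarrow> j < q \<Longrightarrow> 0 \<le> f i j"
  shows "(\<Sum>i<p. \<Sum>j<q. f i j) = 0 \<longleftrightarrow> (\<forall>i<p. \<forall>j<q. f i j = 0)"
proof -
  have "(\<Sum>i<p. \<Sum>j<q. f i j) = (\<Sum>(i,j)\<in>{..<p} \<times> {..<q}. f i j)"
    by (simp add: sum.cartesian_product)
  also have "\<dots> = 0 \<longleftrightarrow> (\<forall>(i,j)\<in>{..<p} \<times> {..<q}. f i j = 0)"
    using assms by (subst sum_nonneg_eq_0_iff) auto
  finally show ?thesis by auto
qed

lemma minner_self_eq_0_iff:
  assumes A: "A \<in> carrier_mat p q"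
  shows "minner A A = 0 \<longleftrightarrow> A = 0\<^sub>m p q"
proof -
  have "minner A A = 0 \<longleftrightarrow> (\<forall>i<p. \<forall>j<q. A $$ (i,j) * A $$ (i,j) = 0)"
    using A by (simp add: minner_eq_sum double_sum_nonneg_eq_0_iff)
  also have "\<dots> \<longleftrightarrow> A = 0\<^sub>m p q"
    using A by (auto simp: eq_matI)
  finally show ?thesis .
qed

lemma entry_le_fnorm:
  assumes A: "A \<in> carrier_mat p q" and i: "i < p" and j: "j < q"
  shows "\<bar>A $$ (i,j)\<bar> \<le> fnorm A"
proof -
  have "A $$ (i,j) * A $$ (i,j) \<le> (\<Sum>j'<q. A $$ (i,j') * A $$ (i,j'))"
    using j by (intro member_le_sum) auto
  also have "\<dots> \<le> (\<Sum>i'<p. \<Sum>j'<q. A $$ (i',j') * A $$ (i',j'))"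
    using i by (intro member_le_sum[of i "{..<p}" "\<lambda>i. \<Sum>j'<q. A $$ (i,j') * A $$ (i,j')"])
       (auto intro: sum_nonneg)
  finally have "(A $$ (i,j))\<^sup>2 \<le> minner A A" using A by (simp add: minner_eq_sum power2_eq_square)
  hence "sqrt ((A $$ (i,j))\<^sup>2) \<le> sqrt (minner A A)" by (rule real_sqrt_le_mono)
  thus ?thesis by (simp add: fnorm_def)
qed

lemma minner_orthogonal_conj:
  assumes Q: "Q \<in> carrier_mat n n" and QQ: "transpose_mat Q * Q = 1\<^sub>m n"
    and M: "M \<in> carrier_mat n n" and N: "N \<in> carrier_mat n n"
  shows "minner (Q * M * transpose_mat Q) (Q * N * transpose_mat Q) = minner M N"
proof -
  have QT: "transpose_mat Q \<in> carrier_mat n n" and MT: "transpose_mat M \<in> carrier_mat n n"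
    and NQ: "N * transpose_mat Q \<in> carrier_mat n n" using Q M N by auto
  have "transpose_mat (Q * M * transpose_mat Q) * (Q * N * transpose_mat Q)
      = Q * (transpose_mat M * ((transpose_mat Q * Q) * (N * transpose_mat Q)))"
    using Q M N QT MT NQ
    by (simp add: transpose_mult[of _ n n _ n] assoc_mult_mat[of _ n n _ n _ n])
  also have "\<dots> = Q * (transpose_mat M * (N * transpose_mat Q))"
    using QQ by (simp add: left_mult_one_mat[OF NQ])
  finally have e: "transpose_mat (Q * M * transpose_mat Q) * (Q * N * transpose_mat Q)
      = Q * (transpose_mat M * (N * transpose_mat Q))" .
  have R: "transpose_mat M * (N * transpose_mat Q) \<in> carrier_mat n n" using MT NQ by auto
  have "mtrace (Q * (transpose_mat M * (N * transpose_mat Q)))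
      = mtrace ((transpose_mat M * (N * transpose_mat Q)) * Q)"
    by (rule mtrace_mult_comm[OF Q R])
  also have "(transpose_mat M * (N * transpose_mat Q)) * Q = transpose_mat M * (N * (transpose_mat Q * Q))"
    using assoc_mult_mat[OF MT NQ Q] assoc_mult_mat[OF N QT Q] by simp
  also have "\<dots> = transpose_mat M * N" using QQ N by simp
  finally show ?thesis unfolding minner_def e .
qed

section \<open>Projection onto the PSD cone\<close>

lemma psd_mats_iff:
  "Y \<in> psd_mats p \<longleftrightarrow> Y \<in> carrier_mat p p \<and> (\<forall>i<p. \<forall>j<p. Y $$ (i,j) = Y $$ (j,i)) \<and>
     (\<forall>v\<in>carrier_vec p. 0 \<le> (\<Sum>i<p. v $ i * (\<Sum>j<p. Y $$ (i,j) * v $ j)))"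
proof -
  have quad: "v \<bullet> (Y *\<^sub>v v) = (\<Sum>i<p. v $ i * (\<Sum>j<p. Y $$ (i,j) * v $ j))"
    if "Y \<in> carrier_mat p p" "v \<in> carrier_vec p" for v
    using that by (auto simp: scalar_prod_def lessThan_atLeast0 intro!: sum.cong)
  have "transpose_mat Y = Y \<longleftrightarrow> (\<forall>i<p. \<forall>j<p. Y $$ (i,j) = Y $$ (j,i))" if "Y \<in> carrier_mat p p"
    using that by (auto simp: eq_matI) (metis carrier_matD index_transpose_mat(1))
  with quad show ?thesis unfolding psd_mats_def symm_mats_def by auto
qed

lemma psd_mats_carrier: "Y \<in> psd_mats p \<Longrightarrow> Y \<in> carrier_mat p p"
  by (simp add: psd_mats_iff)

lemma psd_mats_conic_comb:
  assumes Y1: "Y1 \<in> psd_mats p" and Y2: "Y2 \<in> psd_mats p" and "0 \<le> a" "0 \<le> b"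
  shows "a \<cdot>\<^sub>m Y1 + b \<cdot>\<^sub>m Y2 \<in> psd_mats p"
proof -
  have c1: "Y1 \<in> carrier_mat p p" and c2: "Y2 \<in> carrier_mat p p" using Y1 Y2 psd_mats_carrier by auto
  let ?q = "\<lambda>Y v. \<Sum>i<p. v $ i * (\<Sum>j<p. Y $$ (i,j) * v $ j)"
  have "?q (a \<cdot>\<^sub>m Y1 + b \<cdot>\<^sub>m Y2) v = a * ?q Y1 v + b * ?q Y2 v" for v
    using c1 c2 by (simp add: sum_distrib_left sum.distrib algebra_simps)
  with assms show ?thesis unfolding psd_mats_iff by auto
qed

text \<open>PSD matrices with entries in [-R, R], encoded as functions on nat \<times> nat vanishing outside
  the p \<times> p index range, so that compactness in the product topology is available.\<close>

definition bounded_psd_entries :: "nat \<Rightarrow> real \<Rightarrow> (nat \<times> nat \<Rightarrow> real) set" where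
  "bounded_psd_entries p R =
     PiE UNIV (\<lambda>(i,j). if i < p \<and> j < p then {-R..R} else {0}) \<inter>
     {f. \<forall>i j. i < p \<longrightarrow> j < p \<longrightarrow> f (i,j) = f (j,i)} \<inter>
     {f. \<forall>v. v \<in> carrier_vec p \<longrightarrow> 0 \<le> (\<Sum>i<p. v $ i * (\<Sum>j<p. f (i,j) * v $ j))}"

lemma compact_bounded_psd_entries: "compact (bounded_psd_entries p R)"
proof -
  have "compactin (product_topology (\<lambda>_. euclidean) UNIV)
      (PiE UNIV (\<lambda>(i,j). if i < p \<and> j < p then {-R..R} else {0::real}))"
    unfolding compactin_PiE by auto
  then have "compact (PiE UNIV (\<lambda>(i,j). if i < p \<and> j < p then {-R..R} else {0::real}))"
    by (simp add: euclidean_product_topology)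
  moreover have "closed {f :: nat \<times> nat \<Rightarrow> real. \<forall>i j. i < p \<longrightarrow> j < p \<longrightarrow> f (i,j) = f (j,i)}"
    by (intro closed_Collect_all closed_Collect_imp open_Collect_const closed_Collect_eq
        continuous_on_product_coordinates)
  moreover have "closed {f :: nat \<times> nat \<Rightarrow> real.
      \<forall>v. v \<in> carrier_vec p \<longrightarrow> 0 \<le> (\<Sum>i<p. v $ i * (\<Sum>j<p. f (i,j) * v $ j))}"
    by (intro closed_Collect_all closed_Collect_imp open_Collect_const closed_Collect_le
        continuous_intros continuous_on_product_coordinates)
  ultimately show ?thesis
    unfolding bounded_psd_entries_def by (intro compact_Int_closed closed_Int)
qed

lemma mat_bounded_psd_entries:
  "f \<in> bounded_psd_entries p R \<Longrightarrow> mat p p f \<in> psd_mats p"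
  unfolding bounded_psd_entries_def psd_mats_iff by auto

lemma entries_in_bounded_psd_entries:
  assumes Z: "Z \<in> psd_mats p" and bnd: "\<And>i j. i < p \<Longrightarrow> j < p \<Longrightarrow> \<bar>Z $$ (i,j)\<bar> \<le> R"
  shows "(\<lambda>(i,j). if i < p \<and> j < p then Z $$ (i,j) else 0) \<in> bounded_psd_entries p R"
proof -
  have "-R \<le> Z $$ (i,j) \<and> Z $$ (i,j) \<le> R" if "i < p" "j < p" for i j
    using bnd[OF that] by linarith
  with Z show ?thesis unfolding bounded_psd_entries_def psd_mats_iff
    by (auto simp: PiE_def extensional_def intro!: sum.cong)
qed

lemma psd_nearest_exists:
  assumes B: "B \<in> carrier_mat p p"
  shows "\<exists>Y\<in>psd_mats p. \<forall>Z\<in>psd_mats p. minner (B - Y) (B - Y) \<le> minner (B - Z) (B - Z)"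
proof -
  define R where "R = 2 * fnorm B"
  define K where "K = bounded_psd_entries p R"
  define g where "g f = minner (B - mat p p f) (B - mat p p f)" for f
  have "continuous_on K (\<lambda>f. \<Sum>i<p. \<Sum>j<p. (B $$ (i,j) - f (i,j)) * (B $$ (i,j) - f (i,j)))"
    by (intro continuous_intros continuous_on_subset[OF continuous_on_product_coordinates]) auto
  moreover have "g f = (\<Sum>i<p. \<Sum>j<p. (B $$ (i,j) - f (i,j)) * (B $$ (i,j) - f (i,j)))" for f
    using B unfolding g_def by (subst minner_eq_sum[of _ p p]) auto
  ultimately have cont: "continuous_on K g" by simp
  have "0 \<le> R" unfolding R_def fnorm_def using minner_self_nonneg[OF B] by simp
  then have "(\<lambda>_. 0) \<in> K"
    unfolding K_def bounded_psd_entries_def by (auto simp: PiE_def extensional_def)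
  moreover have "compact K" unfolding K_def by (rule compact_bounded_psd_entries)
  ultimately obtain f0 where f0: "f0 \<in> K" and f0_min: "\<forall>f\<in>K. g f0 \<le> g f"
    using continuous_attains_inf[OF _ _ cont] by blast
  have "B - mat p p (\<lambda>_. 0) = B" using B by (intro eq_matI) auto
  then have zero_min: "g f0 \<le> minner B B"
    using f0_min \<open>(\<lambda>_. 0) \<in> K\<close> unfolding g_def by metis
  show ?thesis
  proof (intro bexI[of _ "mat p p f0"] ballI)
    show "mat p p f0 \<in> psd_mats p" using f0 mat_bounded_psd_entries unfolding K_def by blast
    fix Z assume Z: "Z \<in> psd_mats p"
    have Zc: "Z \<in> carrier_mat p p" using Z psd_mats_carrier by blast
    show "minner (B - mat p p f0) (B - mat p p f0) \<le> minner (B - Z) (B - Z)"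
    proof (cases "minner B B \<le> minner (B - Z) (B - Z)")
      case True
      with zero_min show ?thesis by (simp add: g_def)
    next
      case False
      \<comment> \<open>Z is then within distance 2 fnorm B of 0, so its entries give a point of K\<close>
      have BZ: "B - Z \<in> carrier_mat p p" using B Zc by auto
      have "fnorm (B - Z) \<le> fnorm B" using False unfolding fnorm_def by auto
      moreover have "\<bar>Z $$ (i,j)\<bar> \<le> fnorm B + fnorm (B - Z)" if "i < p" "j < p" for i j
        using entry_le_fnorm[OF B that] entry_le_fnorm[OF BZ that] that B Zc by auto
      ultimately have "(\<lambda>(i,j). if i < p \<and> j < p then Z $$ (i,j) else 0) \<in> K"
        unfolding K_def R_def by (intro entries_in_bounded_psd_entries[OF Z]) force
      moreover have "mat p p (\<lambda>(i,j). if i < p \<and> j < p then Z $$ (i,j) else 0) = Z"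
        using Zc by (intro eq_matI) auto
      ultimately show ?thesis using f0_min unfolding g_def by force
    qed
  qed
qed

lemma psd_nearest_unique:
  assumes B: "B \<in> carrier_mat p p"
    and Y1: "Y1 \<in> psd_mats p" "\<forall>Z\<in>psd_mats p. minner (B - Y1) (B - Y1) \<le> minner (B - Z) (B - Z)"
    and Y2: "Y2 \<in> psd_mats p" "\<forall>Z\<in>psd_mats p. minner (B - Y2) (B - Y2) \<le> minner (B - Z) (B - Z)"
  shows "Y1 = Y2"
proof -
  have c1: "Y1 \<in> carrier_mat p p" and c2: "Y2 \<in> carrier_mat p p" using Y1 Y2 psd_mats_carrier by auto
  define M where "M = (1/2) \<cdot>\<^sub>m Y1 + (1/2) \<cdot>\<^sub>m Y2"
  have M: "M \<in> psd_mats p" unfolding M_def by (rule psd_mats_conic_comb[OF Y1(1) Y2(1)]) auto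
  have Mc: "M \<in> carrier_mat p p" using M psd_mats_carrier by auto
  have BM: "B - M \<in> carrier_mat p p" and BY1: "B - Y1 \<in> carrier_mat p p"
    and BY2: "B - Y2 \<in> carrier_mat p p" and Yc: "Y1 - Y2 \<in> carrier_mat p p"
    using Mc c1 c2 by (auto intro: minus_carrier_mat)
  let ?sq = "\<lambda>X i j. X $$ (i,j) * X $$ (i,j)"
  have "minner (B - M) (B - M)
      = (\<Sum>i<p. \<Sum>j<p. (1/2) * ?sq (B - Y1) i j + (1/2) * ?sq (B - Y2) i j - (1/4) * ?sq (Y1 - Y2) i j)"
    unfolding minner_eq_sum[OF BM BM] using B c1 c2
    by (intro sum.cong refl) (simp add: M_def field_simps)
  also have "\<dots> = (1/2) * minner (B - Y1) (B - Y1) + (1/2) * minner (B - Y2) (B - Y2)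
      - (1/4) * minner (Y1 - Y2) (Y1 - Y2)"
    unfolding minner_eq_sum[OF BY1 BY1] minner_eq_sum[OF BY2 BY2] minner_eq_sum[OF Yc Yc]
    by (simp only: sum.distrib sum_subtractf sum_distrib_left)
  finally have "minner (B - M) (B - M) = \<dots>" .
  moreover have "minner (B - Y1) (B - Y1) \<le> minner (B - M) (B - M)" using Y1 M by auto
  moreover have "minner (B - Y1) (B - Y1) = minner (B - Y2) (B - Y2)" using Y1 Y2 by force
  ultimately have "minner (Y1 - Y2) (Y1 - Y2) = 0"
    using minner_self_nonneg[OF Yc] by linarith
  then have diff0: "Y1 - Y2 = 0\<^sub>m p p" using minner_self_eq_0_iff[OF Yc] by simp
  show ?thesis
  proof (rule eq_matI)
    fix i j assume "i < dim_row Y2" "j < dim_col Y2"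
    with diff0 c2 have "(Y1 - Y2) $$ (i,j) = 0" by auto
    with \<open>i < dim_row Y2\<close> \<open>j < dim_col Y2\<close> show "Y1 $$ (i,j) = Y2 $$ (i,j)" by simp
  qed (use c1 c2 in auto)
qed

lemma proj_psd_nearest:
  assumes B: "B \<in> carrier_mat p p"
  shows "proj_psd p B \<in> psd_mats p"
    and "\<forall>Z\<in>psd_mats p. minner (B - proj_psd p B) (B - proj_psd p B) \<le> minner (B - Z) (B - Z)"
proof -
  have fnorm_le_iff: "fnorm (B - Y) \<le> fnorm (B - Z) \<longleftrightarrow> minner (B - Y) (B - Y) \<le> minner (B - Z) (B - Z)"
    if "Y \<in> psd_mats p" "Z \<in> psd_mats p" for Y Z
  proof -
    have "B - Y \<in> carrier_mat p p" "B - Z \<in> carrier_mat p p"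
      using that B by (auto dest: psd_mats_carrier intro: minus_carrier_mat)
    thus ?thesis unfolding fnorm_def using minner_self_nonneg by (simp add: real_sqrt_le_iff)
  qed
  obtain Y where Y: "Y \<in> psd_mats p" "\<forall>Z\<in>psd_mats p. minner (B - Y) (B - Y) \<le> minner (B - Z) (B - Z)"
    using psd_nearest_exists[OF B] by blast
  have "\<exists>!Y. Y \<in> psd_mats p \<and> (\<forall>Z \<in> psd_mats p. fnorm (B - Y) \<le> fnorm (B - Z))"
  proof (rule ex1I[of _ Y])
    show "Y \<in> psd_mats p \<and> (\<forall>Z \<in> psd_mats p. fnorm (B - Y) \<le> fnorm (B - Z))"
      using Y fnorm_le_iff by blast
  next
    fix Y' assume Y': "Y' \<in> psd_mats p \<and> (\<forall>Z \<in> psd_mats p. fnorm (B - Y') \<le> fnorm (B - Z))"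
    then have "\<forall>Z\<in>psd_mats p. minner (B - Y') (B - Y') \<le> minner (B - Z) (B - Z)"
      using fnorm_le_iff by blast
    with Y' show "Y' = Y" using psd_nearest_unique[OF B _ _ Y] by blast
  qed
  from theI'[OF this, folded proj_psd_def]
  show "proj_psd p B \<in> psd_mats p"
    and "\<forall>Z\<in>psd_mats p. minner (B - proj_psd p B) (B - proj_psd p B) \<le> minner (B - Z) (B - Z)"
    using fnorm_le_iff by blast+
qed

lemma linear_coeff_zero_if_quadratic_nonneg:
  fixes c y :: real
  assumes y: "0 \<le> y" and nonneg: "\<And>u. u \<le> 1 \<Longrightarrow> 0 \<le> 2 * u * c + u\<^sup>2 * y"
  shows "c = 0"
proof (cases "y = 0")
  case True
  with nonneg[of 1] nonneg[of "-1"] show ?thesis by simp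
next
  case False
  with y have y: "0 < y" by simp
  show ?thesis
  proof (cases "- (c / y) \<le> 1")
    case True
    have "0 \<le> 2 * (- (c / y)) * c + (- (c / y))\<^sup>2 * y" by (rule nonneg[OF True])
    also have "\<dots> = - (c * c) / y" using y by (simp add: field_simps power2_eq_square)
    finally have "c * c \<le> 0" using y by (simp add: divide_le_0_iff)
    then have "c * c = 0" using zero_le_square[of c] by linarith
    then show ?thesis by simp
  next
    case False
    with y have "c < - y" by (simp add: field_simps)
    with y nonneg[of 1] show ?thesis by simp
  qed
qed

lemma proj_psd_orthogonal:
  assumes B: "B \<in> carrier_mat p p"
  shows "minner (proj_psd p B) (B - proj_psd p B) = 0"
proof -
  define Y where "Y = proj_psd p B"
  have Y: "Y \<in> psd_mats p" and Y_min: "\<forall>Z\<in>psd_mats p. minner (B - Y) (B - Y) \<le> minner (B - Z) (B - Z)"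
    using proj_psd_nearest[OF B] unfolding Y_def by auto
  have Yc: "Y \<in> carrier_mat p p" using Y psd_mats_carrier by auto
  have "0 \<le> 2 * u * minner Y (B - Y) + u\<^sup>2 * minner Y Y" if u: "u \<le> 1" for u
  proof -
    \<comment> \<open>Y is optimal along its own ray: compare with the PSD matrix (1 - u) Y\<close>
    have "(1 - u) \<cdot>\<^sub>m Y + 0 \<cdot>\<^sub>m Y \<in> psd_mats p" using u by (intro psd_mats_conic_comb[OF Y Y]) auto
    moreover have "(1 - u) \<cdot>\<^sub>m Y + 0 \<cdot>\<^sub>m Y = (1 - u) \<cdot>\<^sub>m Y" using Yc by auto
    ultimately have "minner (B - Y) (B - Y) \<le> minner (B - (1 - u) \<cdot>\<^sub>m Y) (B - (1 - u) \<cdot>\<^sub>m Y)"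
      using Y_min by metis
    also have "\<dots> = minner (B - Y) (B - Y) + 2 * u * minner Y (B - Y) + u\<^sup>2 * minner Y Y"
    proof -
      have BY: "B - Y \<in> carrier_mat p p" and BuY: "B - (1 - u) \<cdot>\<^sub>m Y \<in> carrier_mat p p"
        using Yc by (auto intro: minus_carrier_mat)
      have "minner (B - (1 - u) \<cdot>\<^sub>m Y) (B - (1 - u) \<cdot>\<^sub>m Y) = (\<Sum>i<p. \<Sum>j<p.
          (B - Y) $$ (i,j) * (B - Y) $$ (i,j) + 2 * u * (Y $$ (i,j) * (B - Y) $$ (i,j))
          + u\<^sup>2 * (Y $$ (i,j) * Y $$ (i,j)))"
        unfolding minner_eq_sum[OF BuY BuY] using B Yc
        by (intro sum.cong refl) (simp add: algebra_simps power2_eq_square)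
      also have "\<dots> = minner (B - Y) (B - Y) + 2 * u * minner Y (B - Y) + u\<^sup>2 * minner Y Y"
        unfolding minner_eq_sum[OF BY BY] minner_eq_sum[OF Yc BY] minner_eq_sum[OF Yc Yc]
        by (simp only: sum.distrib sum_distrib_left)
      finally show ?thesis .
    qed
    finally show ?thesis by simp
  qed
  then show ?thesis unfolding Y_def[symmetric]
    by (rule linear_coeff_zero_if_quadratic_nonneg[OF minner_self_nonneg[OF Yc]])
qed

section \<open>The orthogonal projection onto the range of the adjoint\<close>

lemma Aadj_carrier [simp]: "Aadj n As m u \<in> carrier_mat n n"
  by (simp add: Aadj_def)

lemma dim_Pproj [simp]: "dim_row (Pproj n As m X) = n" "dim_col (Pproj n As m X) = n"
  by (simp_all add: Pproj_def Aadj_def)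

lemma Pproj_carrier [simp]: "Pproj n As m X \<in> carrier_mat n n"
  by (simp add: carrier_matI)

lemma Pperp_carrier [simp]: "Pperp n As m X \<in> carrier_mat n n"
  by (simp add: Pperp_def minus_carrier_mat)

lemma minner_Aadj:
  assumes As: "\<forall>k<m. As k \<in> carrier_mat n n" and u: "u \<in> carrier_vec m" and Y: "Y \<in> carrier_mat n n"
  shows "minner (Aadj n As m u) Y = u \<bullet> Aop As m Y"
proof -
  have "minner (Aadj n As m u) Y = (\<Sum>i<n. \<Sum>j<n. \<Sum>k<m. u $ k * (As k $$ (i,j) * Y $$ (i,j)))"
    unfolding minner_eq_sum[OF Aadj_carrier Y]
    by (auto simp: Aadj_def sum_distrib_right mult.assoc intro!: sum.cong)
  also have "\<dots> = (\<Sum>i<n. \<Sum>k<m. \<Sum>j<n. u $ k * (As k $$ (i,j) * Y $$ (i,j)))"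
    by (rule sum.cong[OF refl]) (rule sum.swap)
  also have "\<dots> = (\<Sum>k<m. \<Sum>i<n. \<Sum>j<n. u $ k * (As k $$ (i,j) * Y $$ (i,j)))"
    by (rule sum.swap)
  also have "\<dots> = (\<Sum>k<m. u $ k * minner (As k) Y)"
    using As Y by (auto simp: minner_eq_sum sum_distrib_left intro!: sum.cong)
  also have "\<dots> = u \<bullet> Aop As m Y"
    using u by (simp add: Aop_def scalar_prod_def lessThan_atLeast0)
  finally show ?thesis .
qed

definition Gram :: "(nat \<Rightarrow> real mat) \<Rightarrow> nat \<Rightarrow> real mat" where
  "Gram As m = mat m m (\<lambda>(i,j). minner (As i) (As j))"

lemma Gram_carrier [simp]: "Gram As m \<in> carrier_mat m m"
  by (simp add: Gram_def)

lemma Aop_Aadj_eq_Gram_mult: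
  assumes As: "\<forall>k<m. As k \<in> carrier_mat n n" and u: "u \<in> carrier_vec m"
  shows "Aop As m (Aadj n As m u) = Gram As m *\<^sub>v u"
proof (rule eq_vecI)
  fix i assume "i < dim_vec (Gram As m *\<^sub>v u)"
  then have i: "i < m" by (simp add: Gram_def)
  have "Aop As m (Aadj n As m u) $ i = minner (Aadj n As m u) (As i)"
    using As i by (simp add: Aop_def minner_commute[OF _ Aadj_carrier])
  also have "\<dots> = (\<Sum>j<m. u $ j * minner (As j) (As i))"
    using As i u by (simp add: minner_Aadj Aop_def scalar_prod_def lessThan_atLeast0)
  also have "\<dots> = (Gram As m *\<^sub>v u) $ i"
    using i u As
    by (auto simp: Gram_def scalar_prod_def lessThan_atLeast0 mult.commute intro!: sum.cong minner_commute)
  finally show "Aop As m (Aadj n As m u) $ i = (Gram As m *\<^sub>v u) $ i" .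
qed (simp add: Gram_def Aop_def)

lemma Gram_mult_eq_0_imp_eq_0:
  assumes As: "\<forall>k<m. As k \<in> symm_mats n" and surj: "Aop As m ` symm_mats n = carrier_vec m"
    and u: "u \<in> carrier_vec m" and Gu: "Gram As m *\<^sub>v u = 0\<^sub>v m"
  shows "u = 0\<^sub>v m"
proof -
  have Asc: "\<forall>k<m. As k \<in> carrier_mat n n" using As by (auto simp: symm_mats_def)
  have "minner (Aadj n As m u) (Aadj n As m u) = 0"
    using minner_Aadj[OF Asc u Aadj_carrier] Aop_Aadj_eq_Gram_mult[OF Asc u] Gu u by simp
  then have Au0: "Aadj n As m u = 0\<^sub>m n n" using minner_self_eq_0_iff[of "Aadj n As m u" n n] by simp
  \<comment> \<open>u is orthogonal to the range of the constraint map, which is everything\<close>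
  have "u \<bullet> w = 0" if "w \<in> carrier_vec m" for w
  proof -
    obtain Z where Z: "Z \<in> symm_mats n" "w = Aop As m Z" using \<open>w \<in> carrier_vec m\<close> surj by blast
    then have Zc: "Z \<in> carrier_mat n n" by (simp add: symm_mats_def)
    have "u \<bullet> w = minner (Aadj n As m u) Z" using minner_Aadj[OF Asc u Zc] Z by simp
    also have "\<dots> = 0" using Zc by (simp add: Au0 minner_eq_sum[of _ n n Z])
    finally show ?thesis .
  qed
  then have "(\<Sum>i<m. u $ i * u $ i) = 0" using u by (simp add: scalar_prod_def lessThan_atLeast0)
  then have "\<forall>i<m. u $ i * u $ i = 0" by (subst (asm) sum_nonneg_eq_0_iff) auto
  then show ?thesis using u by (intro eq_vecI) auto
qed

lemma Aop_Aadj_unique_solution: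
  assumes As: "\<forall>k<m. As k \<in> symm_mats n" and surj: "Aop As m ` symm_mats n = carrier_vec m"
    and w: "w \<in> carrier_vec m"
  shows "\<exists>!u. u \<in> carrier_vec m \<and> Aop As m (Aadj n As m u) = w"
proof -
  have Asc: "\<forall>k<m. As k \<in> carrier_mat n n" using As by (auto simp: symm_mats_def)
  let ?G = "Gram As m"
  have "det ?G \<noteq> 0"
  proof
    assume "det ?G = 0"
    then obtain v where "v \<in> carrier_vec m" "v \<noteq> 0\<^sub>v m" "?G *\<^sub>v v = 0\<^sub>v m"
      using det_0_iff_vec_prod_zero[OF Gram_carrier] by blast
    then show False using Gram_mult_eq_0_imp_eq_0[OF As surj] by blast
  qed
  then have "?G \<in> Units (ring_mat TYPE(real) m ())" by (intro det_non_zero_imp_unit) auto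
  then obtain Gi where Gi: "Gi \<in> carrier_mat m m" "?G * Gi = 1\<^sub>m m"
    unfolding Units_def ring_mat_def by auto
  have Giw: "Gi *\<^sub>v w \<in> carrier_vec m" using Gi w by simp
  have "?G *\<^sub>v (Gi *\<^sub>v w) = (?G * Gi) *\<^sub>v w"
    using assoc_mult_mat_vec[OF Gram_carrier[of As m] Gi(1) w] by simp
  then have G_Giw: "?G *\<^sub>v (Gi *\<^sub>v w) = w" using Gi(2) w by simp
  show ?thesis
  proof (rule ex1I[of _ "Gi *\<^sub>v w"])
    show "Gi *\<^sub>v w \<in> carrier_vec m \<and> Aop As m (Aadj n As m (Gi *\<^sub>v w)) = w"
      using Aop_Aadj_eq_Gram_mult[OF Asc Giw] Giw G_Giw by simp
  next
    fix u assume u: "u \<in> carrier_vec m \<and> Aop As m (Aadj n As m u) = w"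
    then have "?G *\<^sub>v u = w" using Aop_Aadj_eq_Gram_mult[OF Asc, of u] by simp
    then have "?G *\<^sub>v (u - Gi *\<^sub>v w) = w - w"
      using u Giw G_Giw by (simp add: mult_minus_distrib_mat_vec[OF Gram_carrier])
    then have "?G *\<^sub>v (u - Gi *\<^sub>v w) = 0\<^sub>v m" using w by simp
    moreover have "u - Gi *\<^sub>v w \<in> carrier_vec m" using u Giw by auto
    ultimately have diff0: "u - Gi *\<^sub>v w = 0\<^sub>v m" using Gram_mult_eq_0_imp_eq_0[OF As surj] by blast
    show "u = Gi *\<^sub>v w"
    proof (rule eq_vecI)
      fix i assume i: "i < dim_vec (Gi *\<^sub>v w)"
      with diff0 u Giw Gi(1) have "(u - Gi *\<^sub>v w) $ i = 0" by auto
      with i show "u $ i = (Gi *\<^sub>v w) $ i" by simp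
    qed (use u Giw Gi(1) in auto)
  qed
qed

lemma Pproj_eq_Aadj:
  assumes "\<forall>k<m. As k \<in> symm_mats n" "Aop As m ` symm_mats n = carrier_vec m"
  obtains u where "u \<in> carrier_vec m" "Pproj n As m X = Aadj n As m u"
    "Aop As m (Aadj n As m u) = Aop As m X"
proof -
  have "Aop As m X \<in> carrier_vec m" by (simp add: Aop_def)
  from theI'[OF Aop_Aadj_unique_solution[OF assms this]] that show thesis
    unfolding Pproj_def by blast
qed

lemma minner_Pproj_Pperp:
  assumes As: "\<forall>k<m. As k \<in> symm_mats n" and surj: "Aop As m ` symm_mats n = carrier_vec m"
    and Y: "Y \<in> carrier_mat n n"
  shows "minner (Pproj n As m X) (Pperp n As m Y) = 0"
proof -
  have Asc: "\<forall>k<m. As k \<in> carrier_mat n n" using As by (auto simp: symm_mats_def)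
  obtain u where u: "u \<in> carrier_vec m" "Pproj n As m X = Aadj n As m u"
    using Pproj_eq_Aadj[OF As surj] by metis
  obtain v where v: "Pproj n As m Y = Aadj n As m v" "Aop As m (Aadj n As m v) = Aop As m Y"
    using Pproj_eq_Aadj[OF As surj] by metis
  have "minner (Pproj n As m X) (Pperp n As m Y)
      = minner (Aadj n As m u) Y - minner (Aadj n As m u) (Aadj n As m v)"
    unfolding Pperp_def u v by (rule minner_diff_right[OF Y Aadj_carrier Aadj_carrier])
  also have "\<dots> = 0"
    using minner_Aadj[OF Asc u(1) Y] minner_Aadj[OF Asc u(1) Aadj_carrier] v(2) by simp
  finally show ?thesis .
qed

lemma pythagoras_swapped_projections:
  assumes As: "\<forall>k<m. As k \<in> symm_mats n" and surj: "Aop As m ` symm_mats n = carrier_vec m"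
    and D: "D \<in> carrier_mat n n" and E: "E \<in> carrier_mat n n"
  shows "minner (D + E) (D + E)
      - minner (Pproj n As m E + Pperp n As m D) (Pproj n As m E + Pperp n As m D)
    = minner (Pproj n As m D) (Pproj n As m D) + minner (Pperp n As m E) (Pperp n As m E)
      + 2 * minner D E"
proof -
  have norm_split: "minner X X = minner (Pproj n As m X) (Pproj n As m X)
      + minner (Pperp n As m X) (Pperp n As m X)" if X: "X \<in> carrier_mat n n" for X
  proof -
    have split: "X = Pproj n As m X + Pperp n As m X"
      using X by (intro eq_matI) (auto simp: Pperp_def)
    have "minner X X = minner (Pproj n As m X + Pperp n As m X) (Pproj n As m X + Pperp n As m X)"
      using arg_cong2[OF split split, of minner] .
    also have "\<dots> = minner (Pproj n As m X) (Pproj n As m X)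
        + minner (Pperp n As m X) (Pperp n As m X) + 2 * minner (Pproj n As m X) (Pperp n As m X)"
      by (rule minner_add_self[of _ n n]) simp_all
    finally show ?thesis using minner_Pproj_Pperp[OF As surj X] by simp
  qed
  have "minner (Pproj n As m E + Pperp n As m D) (Pproj n As m E + Pperp n As m D)
      = minner (Pproj n As m E) (Pproj n As m E) + minner (Pperp n As m D) (Pperp n As m D)
        + 2 * minner (Pproj n As m E) (Pperp n As m D)"
    by (rule minner_add_self[of _ n n]) simp_all
  then show ?thesis
    using minner_add_self[OF D E] minner_Pproj_Pperp[OF As surj D, of E] norm_split[OF D] norm_split[OF E]
    by linarith
qed

section \<open>The block structure of D-tilde\<close>

lemma sum_block_indicator:
  fixes f :: "nat \<Rightarrow> real"
  assumes "b \<le> n"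
  shows "(\<Sum>i<n. if a \<le> i \<and> i < b then f (i - a) else 0) = (\<Sum>i<b - a. f i)"
proof (cases "a \<le> b")
  case True
  have "(\<Sum>i<n. if a \<le> i \<and> i < b then f (i - a) else 0) = (\<Sum>i\<in>{i\<in>{..<n}. a \<le> i \<and> i < b}. f (i - a))"
    by (subst sum.inter_filter) auto
  also have "{i\<in>{..<n}. a \<le> i \<and> i < b} = {0 + a..<(b - a) + a}" using assms True by auto
  also have "(\<Sum>i\<in>{0 + a..<(b - a) + a}. f (i - a)) = (\<Sum>i\<in>{0..<b - a}. f (i + a - a))"
    by (rule sum.shift_bounds_nat_ivl)
  also have "\<dots> = (\<Sum>i<b - a. f i)" by (simp add: lessThan_atLeast0)
  finally show ?thesis .
next
  case False
  then show ?thesis by (intro trans[OF sum.neutral]) auto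
qed

lemma sum_block_indicator2:
  fixes f :: "nat \<Rightarrow> nat \<Rightarrow> real"
  assumes "b \<le> n" "d \<le> n"
  shows "(\<Sum>i<n. \<Sum>j<n. if a \<le> i \<and> i < b then (if c \<le> j \<and> j < d then f (i - a) (j - c) else 0) else 0)
       = (\<Sum>i<b - a. \<Sum>j<d - c. f i j)"
proof -
  have "(\<Sum>i<n. \<Sum>j<n. if a \<le> i \<and> i < b then (if c \<le> j \<and> j < d then f (i - a) (j - c) else 0) else 0)
      = (\<Sum>i<n. if a \<le> i \<and> i < b then (\<Sum>j<n. if c \<le> j \<and> j < d then f (i - a) (j - c) else 0) else 0)"
    by (intro sum.cong refl) auto
  also have "\<dots> = (\<Sum>i<n. if a \<le> i \<and> i < b then (\<Sum>j<d - c. f (i - a) j) else 0)"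
    by (intro sum.cong refl if_cong sum_block_indicator[OF assms(2)])
  also have "\<dots> = (\<Sum>i<b - a. \<Sum>j<d - c. f i j)"
    using assms(1) by (rule sum_block_indicator)
  finally show ?thesis .
qed

lemma dim_Theta [simp]: "dim_row (Theta lam n r s) = s" "dim_col (Theta lam n r s) = r"
  by (simp_all add: Theta_def)

definition Dtilde_core :: "nat \<Rightarrow> nat \<Rightarrow> nat \<Rightarrow> real mat \<Rightarrow> (nat \<Rightarrow> real) \<Rightarrow> real mat \<Rightarrow> real mat" where
  "Dtilde_core n r s Q lam H =
    (let TG = hadamard (Theta lam n r s) (H_ga n r s Q H);
         Pbb = proj_psd (n - s - r) (H_bb n r s Q H)
     in mat n n (\<lambda>(i,j).
               if i < r then
                 (if j < r then H_aa n r s Q H $$ (i, j)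
                  else if j < n - s then (transpose_mat (H_ba n r s Q H)) $$ (i, j - r)
                  else (transpose_mat TG) $$ (i, j - (n - s)))
               else if i < n - s then
                 (if j < r then H_ba n r s Q H $$ (i - r, j)
                  else if j < n - s then Pbb $$ (i - r, j - r)
                  else 0)
               else
                 (if j < r then TG $$ (i - (n - s), j) else 0)))"

lemma Dtilde_eq_conj_core: "Dtilde n r s Q lam H = Q * Dtilde_core n r s Q lam H * transpose_mat Q"
  unfolding Dtilde_def Dtilde_core_def Let_def ..

lemma Dtilde_core_carrier [simp]: "Dtilde_core n r s Q lam H \<in> carrier_mat n n"
  by (simp add: Dtilde_core_def Let_def)

lemma Hhat_carrier:
  assumes "Q \<in> carrier_mat n n" "H \<in> carrier_mat n n"
  shows "Hhat Q H \<in> carrier_mat n n"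
  using assms by (simp add: Hhat_def)

lemma Hhat_symmetric:
  assumes Q: "Q \<in> carrier_mat n n" and H: "H \<in> symm_mats n"
  shows "transpose_mat (Hhat Q H) = Hhat Q H"
proof -
  have Hc: "H \<in> carrier_mat n n" and HT: "transpose_mat H = H" using H by (auto simp: symm_mats_def)
  have "transpose_mat (Hhat Q H) = transpose_mat (transpose_mat Q * (H * Q))"
    using Q Hc by (simp add: Hhat_def assoc_mult_mat[of _ n n _ n _ n])
  also have "\<dots> = transpose_mat (H * Q) * Q"
    using Q Hc by (simp add: transpose_mult[of _ n n _ n])
  also have "\<dots> = Hhat Q H"
    using Q Hc HT by (simp add: Hhat_def transpose_mult[of _ n n _ n])
  finally show ?thesis .
qed

lemma conj_Hhat:
  assumes Q: "Q \<in> carrier_mat n n" and QQ: "transpose_mat Q * Q = 1\<^sub>m n" and H: "H \<in> carrier_mat n n"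
  shows "Q * Hhat Q H * transpose_mat Q = H"
proof -
  have QT: "transpose_mat Q \<in> carrier_mat n n" using Q by simp
  have QQT: "Q * transpose_mat Q = 1\<^sub>m n" by (rule mat_mult_left_right_inverse[OF QT Q QQ])
  have "Q * Hhat Q H * transpose_mat Q = (Q * transpose_mat Q) * H * (Q * transpose_mat Q)"
    using Q QT H by (simp add: Hhat_def assoc_mult_mat[of _ n n _ n _ n])
  then show ?thesis using QQT H by simp
qed

lemma minner_Dtilde_core:
  assumes Q: "Q \<in> carrier_mat n n" and Hs: "H \<in> symm_mats n" and rs: "r + s \<le> n"
  shows "minner (Dtilde_core n r s Q lam H) (Hhat Q H - Dtilde_core n r s Q lam H)
     = 2 * minner (hadamard (Theta lam n r s) (H_ga n r s Q H))
                  (hadamard (Theta_perp lam n r s) (H_ga n r s Q H))"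
proof -
  define M where "M = Dtilde_core n r s Q lam H"
  define Hh where "Hh = Hhat Q H"
  define G where "G = H_ga n r s Q H"
  define Th where "Th = Theta lam n r s"
  define Hbb where "Hbb = H_bb n r s Q H"
  define Pbb where "Pbb = proj_psd (n - s - r) Hbb"
  have Hhc: "Hh \<in> carrier_mat n n"
    using Hs Q by (simp add: Hh_def Hhat_carrier symm_mats_def)
  have Hh_sym: "Hh $$ (i,j) = Hh $$ (j,i)" if "i < n" "j < n" for i j
    using Hhat_symmetric[OF Q Hs] Hhc that unfolding Hh_def
    by (metis carrier_matD index_transpose_mat(1))
  have Mc: "M \<in> carrier_mat n n" by (simp add: M_def)
  have Hbbc: "Hbb \<in> carrier_mat (n - s - r) (n - s - r)" by (simp add: Hbb_def H_bb_def blk_def)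
  have Pbbc: "Pbb \<in> carrier_mat (n - s - r) (n - s - r)"
    using proj_psd_nearest(1)[OF Hbbc] psd_mats_carrier unfolding Pbb_def by blast
  define \<phi> where "\<phi> a b = Th $$ (a,b) * G $$ (a,b) * (G $$ (a,b) - Th $$ (a,b) * G $$ (a,b))" for a b
  define \<psi> where "\<psi> a b = Pbb $$ (a,b) * (Hbb $$ (a,b) - Pbb $$ (a,b))" for a b
  \<comment> \<open>only the beta-beta block and the two mirrored gamma-alpha blocks of M differ from Hh\<close>
  let ?\<beta>\<beta> = "\<lambda>i j. if r \<le> i \<and> i < n - s then (if r \<le> j \<and> j < n - s then \<psi> (i - r) (j - r) else 0) else 0"
  let ?\<gamma>\<alpha> = "\<lambda>i j. if n - s \<le> i \<and> i < n then (if 0 \<le> j \<and> j < r then \<phi> (i - (n - s)) (j - 0) else 0) else 0"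
  let ?\<alpha>\<gamma> = "\<lambda>i j. if 0 \<le> i \<and> i < r then (if n - s \<le> j \<and> j < n then \<phi> (j - (n - s)) (i - 0) else 0) else 0"
  have entry: "M $$ (i,j) * (Hh $$ (i,j) - M $$ (i,j)) = ?\<beta>\<beta> i j + ?\<gamma>\<alpha> i j + ?\<alpha>\<gamma> i j"
    if ij: "i < n" "j < n" for i j
    using ij rs Hh_sym[OF ij] Hh_sym[OF ij(2,1)]
    by (auto simp: M_def Dtilde_core_def Let_def \<psi>_def \<phi>_def Pbb_def hadamard_def Th_def G_def
        Hbb_def H_bb_def H_ga_def H_ba_def H_aa_def blk_def Hh_def)
  have "minner M (Hh - M) = (\<Sum>i<n. \<Sum>j<n. M $$ (i,j) * (Hh $$ (i,j) - M $$ (i,j)))"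
    using Mc Hhc by (simp add: minner_eq_sum[of _ n n] minus_carrier_mat)
  also have "\<dots> = (\<Sum>i<n. \<Sum>j<n. ?\<beta>\<beta> i j + ?\<gamma>\<alpha> i j + ?\<alpha>\<gamma> i j)"
    by (intro sum.cong refl entry) auto
  also have "\<dots> = (\<Sum>i<n. \<Sum>j<n. ?\<beta>\<beta> i j) + (\<Sum>i<n. \<Sum>j<n. ?\<gamma>\<alpha> i j)
      + (\<Sum>i<n. \<Sum>j<n. ?\<alpha>\<gamma> i j)"
    by (simp only: sum.distrib)
  also have "\<dots> = (\<Sum>a<n - s - r. \<Sum>b<n - s - r. \<psi> a b) + (\<Sum>a<s. \<Sum>b<r. \<phi> a b)
      + (\<Sum>b<r. \<Sum>a<s. \<phi> a b)"
    using sum_block_indicator2[where a = r and b = "n - s" and c = r and d = "n - s" and f = \<psi> and n = n]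
      sum_block_indicator2[where a = "n - s" and b = n and c = 0 and d = r and f = \<phi> and n = n]
      sum_block_indicator2[where a = 0 and b = r and c = "n - s" and d = n and f = "\<lambda>b a. \<phi> a b" and n = n]
      rs by simp
  also have "(\<Sum>a<n - s - r. \<Sum>b<n - s - r. \<psi> a b) = minner Pbb (Hbb - Pbb)"
    using Pbbc Hbbc by (simp add: \<psi>_def minner_eq_sum[of _ "n - s - r" "n - s - r"] minus_carrier_mat)
  also have "\<dots> = 0" unfolding Pbb_def by (rule proj_psd_orthogonal[OF Hbbc])
  also have "(\<Sum>b<r. \<Sum>a<s. \<phi> a b) = (\<Sum>a<s. \<Sum>b<r. \<phi> a b)"
    by (rule sum.swap)
  also have "(\<Sum>a<s. \<Sum>b<r. \<phi> a b) = minner (hadamard Th G) (hadamard (Theta_perp lam n r s) G)"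
    by (simp add: minner_eq_sum[of _ s r] hadamard_def Theta_perp_def ones_mat_def Th_def Theta_def
        \<phi>_def algebra_simps)
  finally show ?thesis unfolding M_def Hh_def G_def Th_def by simp
qed

lemma minner_Dtilde_Dtilde_perp:
  assumes Q: "Q \<in> carrier_mat n n" and QQ: "transpose_mat Q * Q = 1\<^sub>m n"
    and Hs: "H \<in> symm_mats n" and rs: "r + s \<le> n"
  shows "minner (Dtilde n r s Q lam H) (Dtilde_perp n r s Q lam H)
     = 2 * minner (hadamard (Theta lam n r s) (H_ga n r s Q H))
                  (hadamard (Theta_perp lam n r s) (H_ga n r s Q H))"
proof -
  let ?M = "Dtilde_core n r s Q lam H" and ?Hh = "Hhat Q H"
  have Hc: "H \<in> carrier_mat n n" using Hs by (simp add: symm_mats_def)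
  have Hhc: "?Hh \<in> carrier_mat n n" by (rule Hhat_carrier[OF Q Hc])
  have "minner (Dtilde n r s Q lam H) (Dtilde_perp n r s Q lam H)
      = minner (Q * ?M * transpose_mat Q) (Q * ?Hh * transpose_mat Q)
        - minner (Q * ?M * transpose_mat Q) (Q * ?M * transpose_mat Q)"
    unfolding Dtilde_perp_def Dtilde_eq_conj_core conj_Hhat[OF Q QQ Hc]
    using Q Hc by (intro minner_diff_right) auto
  also have "\<dots> = minner ?M ?Hh - minner ?M ?M"
    by (simp only: minner_orthogonal_conj[OF Q QQ Dtilde_core_carrier Hhc]
        minner_orthogonal_conj[OF Q QQ Dtilde_core_carrier Dtilde_core_carrier])
  also have "\<dots> = minner ?M (?Hh - ?M)"
    using Hhc by (simp add: minner_diff_right)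
  finally show ?thesis using minner_Dtilde_core[OF Q Hs rs] by simp
qed

lemma Theta_strictly_between_0_1:
  assumes lam_pos: "\<forall>j<r. lam j > 0" and lam_neg: "\<forall>i. n - s \<le> i \<and> i < n \<longrightarrow> lam i < 0"
    and "s \<le> n" "i < s" "j < r"
  shows "0 < Theta lam n r s $$ (i,j)" "Theta lam n r s $$ (i,j) < 1"
proof -
  have "n - s \<le> n - s + i \<and> n - s + i < n" using assms(3-5) by linarith
  then have pos: "0 < lam j" and neg: "lam (n - s + i) < 0" using lam_pos lam_neg assms(5) by blast+
  have Theta_ij: "Theta lam n r s $$ (i,j) = lam j / (lam j - lam (n - s + i))"
    using assms(4,5) by (simp add: Theta_def)
  show "0 < Theta lam n r s $$ (i,j)"
    unfolding Theta_ij using pos neg by (intro divide_pos_pos) auto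
  show "Theta lam n r s $$ (i,j) < 1"
    unfolding Theta_ij using pos neg by (subst divide_less_eq) auto
qed

lemma minner_hadamard_ones_diff:
  assumes T: "T \<in> carrier_mat s r" and G: "G \<in> carrier_mat s r"
  shows "minner (hadamard T G) (hadamard (ones_mat s r - T) G)
       = (\<Sum>i<s. \<Sum>j<r. T $$ (i,j) * (1 - T $$ (i,j)) * (G $$ (i,j))\<^sup>2)"
  using T G by (simp add: minner_eq_sum[of _ s r] hadamard_def ones_mat_def power2_eq_square
      algebra_simps)

lemma minner_hadamard_ones_diff_sign:
  assumes T: "T \<in> carrier_mat s r" and G: "G \<in> carrier_mat s r"
    and T01: "\<And>i j. i < s \<Longrightarrow> j < r \<Longrightarrow> 0 < T $$ (i,j) \<and> T $$ (i,j) < 1"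
  shows "0 \<le> minner (hadamard T G) (hadamard (ones_mat s r - T) G)"
    and "minner (hadamard T G) (hadamard (ones_mat s r - T) G) = 0 \<longleftrightarrow> G = 0\<^sub>m s r"
proof -
  have nonneg: "0 \<le> T $$ (i,j) * (1 - T $$ (i,j)) * (G $$ (i,j))\<^sup>2" if "i < s" "j < r" for i j
    using T01[OF that] by simp
  then show "0 \<le> minner (hadamard T G) (hadamard (ones_mat s r - T) G)"
    unfolding minner_hadamard_ones_diff[OF T G] by (auto intro!: sum_nonneg)
  have "minner (hadamard T G) (hadamard (ones_mat s r - T) G) = 0
      \<longleftrightarrow> (\<forall>i<s. \<forall>j<r. T $$ (i,j) * (1 - T $$ (i,j)) * (G $$ (i,j))\<^sup>2 = 0)"
    unfolding minner_hadamard_ones_diff[OF T G] using nonneg by (rule double_sum_nonneg_eq_0_iff)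
  also have "\<dots> \<longleftrightarrow> (\<forall>i<s. \<forall>j<r. G $$ (i,j) = 0)"
  proof -
    have "T $$ (i,j) * (1 - T $$ (i,j)) * (G $$ (i,j))\<^sup>2 = 0 \<longleftrightarrow> G $$ (i,j) = 0"
      if "i < s" "j < r" for i j
      using T01[OF that] by auto
    then show ?thesis by simp
  qed
  also have "\<dots> \<longleftrightarrow> G = 0\<^sub>m s r"
    using G by (auto simp: eq_matI)
  finally show "minner (hadamard T G) (hadamard (ones_mat s r - T) G) = 0 \<longleftrightarrow> G = 0\<^sub>m s r" .
qed

theorem lemma16:
  fixes n m r s :: nat and As :: "nat \<Rightarrow> real mat" and b y :: "real vec"
    and C X S Q H :: "real mat" and \<sigma> :: real and lam :: "nat \<Rightarrow> real"
  assumes As_sym: "\<forall>i<m. As i \<in> symm_mats n"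
    and A_surj: "Aop As m ` symm_mats n = carrier_vec m"
    and C_sym: "C \<in> symm_mats n" and b_dim: "b \<in> carrier_vec m"
    and kkt: "sdp_kkt n As m b C X y S"
    and sigma_pos: "\<sigma> > 0"
    and r_def: "r = vec_space.rank n X"
    and s_def: "s = vec_space.rank n S"
    and Q_carrier: "Q \<in> carrier_mat n n"
    and Q_orth: "transpose_mat Q * Q = 1\<^sub>m n"
    and Z_eig: "X - \<sigma> \<cdot>\<^sub>m S = Q * mat_diag n lam * transpose_mat Q"
    and lam_sorted: "\<forall>i j. i \<le> j \<and> j < n \<longrightarrow> lam j \<le> lam i"
    and rs_le: "r + s \<le> n"
    and lam_pos: "\<forall>i<r. lam i > 0"
    and lam_zero: "\<forall>i. r \<le> i \<and> i < n - s \<longrightarrow> lam i = 0"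
    and lam_neg: "\<forall>i. n - s \<le> i \<and> i < n \<longrightarrow> lam i < 0"
    and H_sym: "H \<in> symm_mats n"
  shows "minner (Dtilde n r s Q lam H) (Dtilde_perp n r s Q lam H)
           = 2 * minner (hadamard (Theta lam n r s) (H_ga n r s Q H))
                        (hadamard (Theta_perp lam n r s) (H_ga n r s Q H))
       \<and> 0 \<le> minner (hadamard (Theta lam n r s) (H_ga n r s Q H))
                     (hadamard (Theta_perp lam n r s) (H_ga n r s Q H))
       \<and> (minner (hadamard (Theta lam n r s) (H_ga n r s Q H))
                 (hadamard (Theta_perp lam n r s) (H_ga n r s Q H)) = 0
            \<longleftrightarrow> H_ga n r s Q H = 0\<^sub>m s r)
       \<and> (fnorm H)\<^sup>2 - (fnorm (Mtilde As m n r s Q lam H))\<^sup>2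
           = (fnorm (Pproj n As m (Dtilde n r s Q lam H)))\<^sup>2
             + (fnorm (Pperp n As m (Dtilde_perp n r s Q lam H)))\<^sup>2
             + 4 * minner (hadamard (Theta lam n r s) (H_ga n r s Q H))
                          (hadamard (Theta_perp lam n r s) (H_ga n r s Q H))"
proof -
  \<comment> \<open>The KKT, rank and spectral-decomposition hypotheses only describe the setting: the proof
    uses merely that Q is orthogonal, the sign pattern of lam, and surjectivity of the constraint map.\<close>
  let ?D = "Dtilde n r s Q lam H" and ?E = "Dtilde_perp n r s Q lam H"
  let ?T = "minner (hadamard (Theta lam n r s) (H_ga n r s Q H))
                   (hadamard (Theta_perp lam n r s) (H_ga n r s Q H))"
  have Hc: "H \<in> carrier_mat n n" using H_sym by (simp add: symm_mats_def)
  have Dc: "?D \<in> carrier_mat n n"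
    unfolding Dtilde_eq_conj_core using Q_carrier by (intro mult_carrier_mat) auto
  have Ec: "?E \<in> carrier_mat n n" unfolding Dtilde_perp_def by (rule minus_carrier_mat[OF Dc])
  have H_split: "H = ?D + ?E" using Hc Dc by (intro eq_matI) (auto simp: Dtilde_perp_def)
  have inner: "minner ?D ?E = 2 * ?T"
    by (rule minner_Dtilde_Dtilde_perp[OF Q_carrier Q_orth H_sym rs_le])
  have Theta01: "0 < Theta lam n r s $$ (i,j) \<and> Theta lam n r s $$ (i,j) < 1"
    if "i < s" "j < r" for i j
    using Theta_strictly_between_0_1[OF _ lam_neg _ that] lam_pos rs_le by auto
  have Gc: "H_ga n r s Q H \<in> carrier_mat s r" using rs_le by (simp add: H_ga_def blk_def)
  have Thc: "Theta lam n r s \<in> carrier_mat s r" by (simp add: carrier_matI)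
  note T_props = minner_hadamard_ones_diff_sign[OF Thc Gc Theta01, folded Theta_perp_def]
  have "(fnorm H)\<^sup>2 - (fnorm (Mtilde As m n r s Q lam H))\<^sup>2
      = minner (?D + ?E) (?D + ?E)
        - minner (Pproj n As m ?E + Pperp n As m ?D) (Pproj n As m ?E + Pperp n As m ?D)"
    using Hc by (simp add: power2_fnorm[of _ n n] Mtilde_def flip: H_split)
  also have "\<dots> = (fnorm (Pproj n As m ?D))\<^sup>2 + (fnorm (Pperp n As m ?E))\<^sup>2 + 4 * ?T"
    using pythagoras_swapped_projections[OF As_sym A_surj Dc Ec] inner
    by (simp add: power2_fnorm[of _ n n])
  finally show ?thesis using inner T_props by simp
qed

end
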